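(* Let $\mathbf v\in\mathbb R_{<0}^{n\times m}$. There is a bijection $f\leftrightarrow G_f$ between the faces of the Pareto frontier of $\mathcal U(\mathbf v)$ and the set $\mathrm{MWW}(\mathbf v)$ such that, for every face $f$, an allocation $\mathbf z$ satisfies $\mathbf u(\mathbf z)\in f$ if and only if $G_{\mathbf z}$ is a subgraph of $G_f$.
   Context: Setup: agents $[n]$, chores $[m]$, allocations $\mathbf z\in\mathbb R^{n\times m}_{\ge0}$ with column sums $1$, $u_i(\mathbf z_i)=\sum_jv_{i,j}z_{i,j}$. $\mathcal U(\mathbf v)=\{\mathbf u(\mathbf z):\mathbf z\text{ allocation}\}\subset\mathbb R^n$ (a convex polytope). A face of the Pareto frontier is a set of the form $\arg\max_{\mathbf u\in\mathcal U(\mathbf v)}\langle\tau,\mathbf u\rangle$ for some $\tau\in\mathbb R^n_{>0}$. The consumption graph $G_{\mathbf z}$ has edge $(i,j)$ iff $z_{i,j}>0$. For $\tau\in\mathbb R^n_{>0}$, $G_\tau(\mathbf v)$ is the bipartite graph on $([n],[m])$ with edge $(i,j)$ iff $\tau_i|v_{i,j}|\le\tau_{i'}|v_{i',j}|$ for all $i'$; $\mathrm{MWW}(\mathbf v)=\{G_\tau(\mathbf v):\tau\in\mathbb R^n_{>0}\}$. *)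

theory Defs
  imports Complex_Main
begin

text \<open>Agents are the elements of a finite type 'n, chores the elements of a finite type 'm.
  Valuations v i j, allocations z i j (fraction of chore j given to agent i).\<close>

definition is_allocation :: "('n::finite \<Rightarrow> 'm::finite \<Rightarrow> real) \<Rightarrow> bool" where
  "is_allocation z \<longleftrightarrow> (\<forall>i j. z i j \<ge> 0) \<and> (\<forall>j. (\<Sum>i\<in>UNIV. z i j) = 1)"

definition util :: "('n::finite \<Rightarrow> 'm::finite \<Rightarrow> real) \<Rightarrow> ('n \<Rightarrow> 'm \<Rightarrow> real) \<Rightarrow> ('n \<Rightarrow> real)" where
  "util v z = (\<lambda>i. \<Sum>j\<in>UNIV. v i j * z i j)"

definition util_set :: "('n::finite \<Rightarrow> 'm::finite \<Rightarrow> real) \<Rightarrow> ('n \<Rightarrow> real) set" where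
  "util_set v = {util v z | z. is_allocation z}"

definition pareto_faces :: "('n::finite \<Rightarrow> 'm::finite \<Rightarrow> real) \<Rightarrow> ('n \<Rightarrow> real) set set" where
  "pareto_faces v = {{x \<in> util_set v. \<forall>y \<in> util_set v. (\<Sum>i\<in>UNIV. \<tau> i * y i) \<le> (\<Sum>i\<in>UNIV. \<tau> i * x i)}
                     | \<tau>. \<forall>i. \<tau> i > 0}"

definition consumption_graph :: "('n::finite \<Rightarrow> 'm::finite \<Rightarrow> real) \<Rightarrow> ('n \<times> 'm) set" where
  "consumption_graph z = {(i, j). z i j > 0}"

definition G_tau :: "('n::finite \<Rightarrow> real) \<Rightarrow> ('n \<Rightarrow> 'm::finite \<Rightarrow> real) \<Rightarrow> ('n \<times> 'm) set" where
  "G_tau \<tau> v = {(i, j). \<forall>i'. \<tau> i * \<bar>v i j\<bar> \<le> \<tau> i' * \<bar>v i' j\<bar>}"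

definition MWW :: "('n::finite \<Rightarrow> 'm::finite \<Rightarrow> real) \<Rightarrow> ('n \<times> 'm) set set" where
  "MWW v = {G_tau \<tau> v | \<tau>. \<forall>i. \<tau> i > 0}"

end

theory Submission
  imports Defs
begin

text \<open>For nonpositive valuations, the welfare weighted by \<tau> is minus the total weighted cost
  sum_j sum_i \<tau>_i |v_ij| z_ij. Each chore costs at least the minimal weighted cost of its column,
  with equality exactly when it is given only to minimizers, i.e. along edges of G_\<tau>. Hence the
  face maximizing \<tau> consists of the utility vectors of allocations supported on G_\<tau>. Every edge
  of G_\<tau> lies in the support of such an allocation, so G_\<tau> is recovered from the face as the
  union of these supports; this makes face \<mapsto> G_\<tau> a well-defined bijection.\<close>

definition weighted_cost :: "('n \<Rightarrow> real) \<Rightarrow> ('n \<Rightarrow> 'm \<Rightarrow> real) \<Rightarrow> 'n \<Rightarrow> 'm \<Rightarrow> real" where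
  "weighted_cost \<tau> v i j = \<tau> i * \<bar>v i j\<bar>"

definition min_cost :: "('n::finite \<Rightarrow> real) \<Rightarrow> ('n \<Rightarrow> 'm \<Rightarrow> real) \<Rightarrow> 'm \<Rightarrow> real" where
  "min_cost \<tau> v j = Min (range (\<lambda>i. weighted_cost \<tau> v i j))"

definition allocation_cost ::
    "('n::finite \<Rightarrow> real) \<Rightarrow> ('n \<Rightarrow> 'm::finite \<Rightarrow> real) \<Rightarrow> ('n \<Rightarrow> 'm \<Rightarrow> real) \<Rightarrow> real" where
  "allocation_cost \<tau> v z = (\<Sum>j\<in>UNIV. \<Sum>i\<in>UNIV. weighted_cost \<tau> v i j * z i j)"

definition pure_allocation :: "('m \<Rightarrow> 'n) \<Rightarrow> 'n \<Rightarrow> 'm \<Rightarrow> real" where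
  "pure_allocation a = (\<lambda>i j. if i = a j then 1 else 0)"

definition face :: "('n::finite \<Rightarrow> 'm::finite \<Rightarrow> real) \<Rightarrow> ('n \<Rightarrow> real) \<Rightarrow> ('n \<Rightarrow> real) set" where
  "face v \<tau> = {x \<in> util_set v. \<forall>y \<in> util_set v. (\<Sum>i\<in>UNIV. \<tau> i * y i) \<le> (\<Sum>i\<in>UNIV. \<tau> i * x i)}"

definition face_support :: "('n::finite \<Rightarrow> 'm::finite \<Rightarrow> real) \<Rightarrow> ('n \<Rightarrow> real) set \<Rightarrow> ('n \<times> 'm) set" where
  "face_support v f = \<Union> {consumption_graph z | z. is_allocation z \<and> util v z \<in> f}"

lemma min_cost_le: "min_cost \<tau> v j \<le> weighted_cost \<tau> v i j"
  unfolding min_cost_def by (rule Min_le) auto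

lemma min_cost_attained: "\<exists>i. weighted_cost \<tau> v i j = min_cost \<tau> v j"
proof -
  have "min_cost \<tau> v j \<in> range (\<lambda>i. weighted_cost \<tau> v i j)"
    unfolding min_cost_def by (rule Min_in) auto
  then show ?thesis by auto
qed

lemma mem_G_tau_iff: "(i, j) \<in> G_tau \<tau> v \<longleftrightarrow> weighted_cost \<tau> v i j = min_cost \<tau> v j"
proof -
  have "(i, j) \<in> G_tau \<tau> v \<longleftrightarrow> (\<forall>i'. weighted_cost \<tau> v i j \<le> weighted_cost \<tau> v i' j)"
    by (simp add: G_tau_def weighted_cost_def)
  also have "\<dots> \<longleftrightarrow> weighted_cost \<tau> v i j = min_cost \<tau> v j"
    using min_cost_le min_cost_attained by (metis order_antisym)
  finally show ?thesis .
qed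

lemma G_tau_has_selection: "\<exists>a. \<forall>j. (a j, j) \<in> G_tau \<tau> v"
proof -
  have "\<forall>j. \<exists>i. (i, j) \<in> G_tau \<tau> v" by (metis min_cost_attained mem_G_tau_iff)
  then show ?thesis by (rule choice)
qed

lemma is_allocation_pure_allocation: "is_allocation (pure_allocation a)"
  unfolding is_allocation_def pure_allocation_def by auto

lemma consumption_graph_pure_allocation:
  "consumption_graph (pure_allocation a) = {(i, j). i = a j}"
  unfolding consumption_graph_def pure_allocation_def by auto

lemma edge_in_pure_allocation_on_G_tau:
  assumes "(i, j) \<in> G_tau \<tau> v"
  obtains z where "is_allocation z" "consumption_graph z \<subseteq> G_tau \<tau> v" "(i, j) \<in> consumption_graph z"
proof -
  obtain a where a: "\<forall>j. (a j, j) \<in> G_tau \<tau> v" using G_tau_has_selection by blast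
  let ?z = "pure_allocation (a(j := i))"
  have "consumption_graph ?z \<subseteq> G_tau \<tau> v" "(i, j) \<in> consumption_graph ?z"
    using a assms by (auto simp: consumption_graph_pure_allocation)
  then show thesis using that is_allocation_pure_allocation by blast
qed

lemma weighted_welfare_eq_neg_cost:
  assumes "\<forall>i j. v i j \<le> 0"
  shows "(\<Sum>i\<in>UNIV. \<tau> i * util v z i) = - allocation_cost \<tau> v z"
proof -
  have "(\<Sum>i\<in>UNIV. \<tau> i * util v z i) = (\<Sum>i\<in>UNIV. \<Sum>j\<in>UNIV. - (weighted_cost \<tau> v i j * z i j))"
    using assms by (auto simp: util_def sum_distrib_left weighted_cost_def intro!: sum.cong)
  also have "\<dots> = - allocation_cost \<tau> v z"
    unfolding allocation_cost_def by (subst sum.swap) (simp add: sum_negf)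
  finally show ?thesis .
qed

lemma allocation_cost_eq_min_plus_excess:
  assumes "is_allocation z"
  shows "allocation_cost \<tau> v z = (\<Sum>j\<in>UNIV. min_cost \<tau> v j)
           + (\<Sum>j\<in>UNIV. \<Sum>i\<in>UNIV. (weighted_cost \<tau> v i j - min_cost \<tau> v j) * z i j)"
proof -
  have "(\<Sum>i\<in>UNIV. weighted_cost \<tau> v i j * z i j)
      = min_cost \<tau> v j + (\<Sum>i\<in>UNIV. (weighted_cost \<tau> v i j - min_cost \<tau> v j) * z i j)" for j
  proof -
    have "(\<Sum>i\<in>UNIV. z i j) = 1" using assms by (simp add: is_allocation_def)
    then show ?thesis by (simp add: left_diff_distrib sum_subtractf flip: sum_distrib_left)
  qed
  then show ?thesis by (simp add: allocation_cost_def sum.distrib)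
qed

lemma excess_nonneg_terms:
  assumes "is_allocation z"
  shows "0 \<le> (weighted_cost \<tau> v i j - min_cost \<tau> v j) * z i j"
  using assms min_cost_le by (intro mult_nonneg_nonneg) (auto simp: is_allocation_def)

lemma excess_eq_0_iff:
  assumes "is_allocation z"
  shows "(\<Sum>j\<in>UNIV. \<Sum>i\<in>UNIV. (weighted_cost \<tau> v i j - min_cost \<tau> v j) * z i j) = 0
           \<longleftrightarrow> consumption_graph z \<subseteq> G_tau \<tau> v"
proof -
  have nonneg: "0 \<le> (weighted_cost \<tau> v i j - min_cost \<tau> v j) * z i j" for i j
    using excess_nonneg_terms[OF assms] .
  have "(\<Sum>j\<in>UNIV. \<Sum>i\<in>UNIV. (weighted_cost \<tau> v i j - min_cost \<tau> v j) * z i j) = 0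
      \<longleftrightarrow> (\<forall>i j. (weighted_cost \<tau> v i j - min_cost \<tau> v j) * z i j = 0)"
    using nonneg by (simp add: sum_nonneg sum_nonneg_eq_0_iff) blast
  also have "\<dots> \<longleftrightarrow> consumption_graph z \<subseteq> G_tau \<tau> v"
  proof -
    have "(weighted_cost \<tau> v i j - min_cost \<tau> v j) * z i j = 0 \<longleftrightarrow> (z i j > 0 \<longrightarrow> (i, j) \<in> G_tau \<tau> v)"
      for i j
      using assms by (auto simp: mem_G_tau_iff is_allocation_def order.order_iff_strict)
    then show ?thesis by (auto simp: consumption_graph_def)
  qed
  finally show ?thesis .
qed

lemma allocation_cost_ge_min:
  assumes "is_allocation z"
  shows "(\<Sum>j\<in>UNIV. min_cost \<tau> v j) \<le> allocation_cost \<tau> v z"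
  using allocation_cost_eq_min_plus_excess[OF assms] excess_nonneg_terms[OF assms]
  by (simp add: sum_nonneg)

lemma allocation_cost_eq_min_iff:
  assumes "is_allocation z"
  shows "allocation_cost \<tau> v z = (\<Sum>j\<in>UNIV. min_cost \<tau> v j) \<longleftrightarrow> consumption_graph z \<subseteq> G_tau \<tau> v"
  using allocation_cost_eq_min_plus_excess[OF assms] excess_eq_0_iff[OF assms] by simp

lemma util_mem_face_iff:
  assumes v: "\<forall>i j. v i j \<le> 0" and z: "is_allocation z"
  shows "util v z \<in> face v \<tau> \<longleftrightarrow> consumption_graph z \<subseteq> G_tau \<tau> v"
proof -
  let ?C = "\<Sum>j\<in>UNIV. min_cost \<tau> v j"
  obtain a where "\<forall>j. (a j, j) \<in> G_tau \<tau> v" using G_tau_has_selection by blast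
  then have "allocation_cost \<tau> v (pure_allocation a) = ?C"
    by (auto simp: allocation_cost_eq_min_iff is_allocation_pure_allocation
                   consumption_graph_pure_allocation)
  have "util v z \<in> face v \<tau> \<longleftrightarrow> (\<forall>w. is_allocation w \<longrightarrow> allocation_cost \<tau> v z \<le> allocation_cost \<tau> v w)"
    using z unfolding face_def util_set_def by (auto simp: weighted_welfare_eq_neg_cost[OF v])
  also have "\<dots> \<longleftrightarrow> allocation_cost \<tau> v z \<le> ?C"
    using \<open>allocation_cost \<tau> v (pure_allocation a) = ?C\<close>
    by (metis is_allocation_pure_allocation allocation_cost_ge_min order_trans)
  also have "\<dots> \<longleftrightarrow> consumption_graph z \<subseteq> G_tau \<tau> v"
    using allocation_cost_ge_min[OF z] allocation_cost_eq_min_iff[OF z] by (simp add: eq_iff)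
  finally show ?thesis .
qed

lemma face_eq_supported_utilities:
  assumes "\<forall>i j. v i j \<le> 0"
  shows "face v \<tau> = {util v z | z. is_allocation z \<and> consumption_graph z \<subseteq> G_tau \<tau> v}"
proof -
  have "face v \<tau> \<subseteq> util_set v" by (auto simp: face_def)
  then show ?thesis using util_mem_face_iff[OF assms] unfolding util_set_def by blast
qed

lemma face_support_face:
  assumes "\<forall>i j. v i j \<le> 0"
  shows "face_support v (face v \<tau>) = G_tau \<tau> v"
proof
  show "face_support v (face v \<tau>) \<subseteq> G_tau \<tau> v"
    unfolding face_support_def using util_mem_face_iff[OF assms] by blast
next
  show "G_tau \<tau> v \<subseteq> face_support v (face v \<tau>)"
  proof
    fix e assume "e \<in> G_tau \<tau> v"
    then obtain i j where "e = (i, j)" "(i, j) \<in> G_tau \<tau> v" by (cases e) auto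
    then obtain z where "is_allocation z" "consumption_graph z \<subseteq> G_tau \<tau> v" "e \<in> consumption_graph z"
      using edge_in_pure_allocation_on_G_tau by metis
    then show "e \<in> face_support v (face v \<tau>)"
      unfolding face_support_def using util_mem_face_iff[OF assms] by blast
  qed
qed

theorem lemma1:
  fixes v :: "'n::finite \<Rightarrow> 'm::finite \<Rightarrow> real"
  assumes "\<forall>i j. v i j < 0"
  shows "\<exists>g. bij_betw g (pareto_faces v) (MWW v) \<and>
    (\<forall>f \<in> pareto_faces v. \<forall>z. is_allocation z \<longrightarrow>
        (util v z \<in> f \<longleftrightarrow> consumption_graph z \<subseteq> g f))"
proof (intro exI conjI)
  have v: "\<forall>i j. v i j \<le> 0" using assms by (simp add: less_imp_le)
  have faces: "pareto_faces v = face v ` {\<tau>. \<forall>i. \<tau> i > 0}"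
    unfolding pareto_faces_def face_def by blast
  have "face_support v ` pareto_faces v = MWW v"
    unfolding faces MWW_def image_image face_support_face[OF v] by (simp add: setcompr_eq_image)
  moreover have "inj_on (face_support v) (pareto_faces v)"
    unfolding faces inj_on_def
    by (simp add: face_support_face[OF v]) (simp add: face_eq_supported_utilities[OF v])
  ultimately show "bij_betw (face_support v) (pareto_faces v) (MWW v)"
    by (simp add: bij_betw_def)
  show "\<forall>f \<in> pareto_faces v. \<forall>z. is_allocation z \<longrightarrow>
          (util v z \<in> f \<longleftrightarrow> consumption_graph z \<subseteq> face_support v f)"
    unfolding faces by (simp add: face_support_face[OF v] util_mem_face_iff[OF v])
qed

end
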